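(* Let $n\geqslant k$ and let $S=(v_1,\ldots,v_n)\in\Omega(n,k)$. The function $F(S')=\vol\left(\mathop{\rm co}\{\pm v'_1,\ldots,\pm v'_n\}\right)$ attains its maximum over $\Omega(n,k)$ at $S$ if and only if for every $(n,k)$-frame $\tilde S=(\tilde v_1,\dots,\tilde v_n)$, $$\frac{\vol\left(\mathop{\rm co}\{\pm\tilde v_1,\ldots,\pm\tilde v_n\}\right)}{\vol\left(\mathop{\rm co}\{\pm v_1,\ldots,\pm v_n\}\right)}\leqslant\sqrt{\det A_{\tilde S}}.$$ Likewise, $F$ attains its minimum over $\Omega(n,k)$ at $S$ if and only if the reverse inequality $\geqslant$ holds for every $(n,k)$-frame $\tilde S$.
   Context: An $(n,k)$-frame is an ordered $n$-tuple of vectors in $\mathbb{R}^k$ spanning $\mathbb{R}^k$. For a frame $S=(w_1,\dots,w_n)$, $A_S=\sum_{i=1}^n w_i\otimes w_i=\sum w_iw_i^T$. An $(n,k)$-uframe is a frame with $A_S=I_k$; $\Omega(n,k)$ is the set of all $(n,k)$-uframes. $\vol$ is $k$-dimensional volume. *)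

theory Defs
  imports "HOL-Analysis.Analysis"
begin

text \<open>An (n,k)-frame: an n-tuple of vectors in R^k (indexed by the finite type 'n,
  n = CARD('n), k = CARD('k)) spanning R^k.\<close>
definition frame :: "('n::finite \<Rightarrow> real^'k::finite) \<Rightarrow> bool" where
  "frame w \<longleftrightarrow> span (range w) = UNIV"

definition A_mat :: "('n::finite \<Rightarrow> real^'k::finite) \<Rightarrow> real^'k^'k" where
  "A_mat w = (\<Sum>i\<in>UNIV. (\<chi> a b. w i $ a * w i $ b))"

definition uframe :: "('n::finite \<Rightarrow> real^'k::finite) \<Rightarrow> bool" where
  "uframe w \<longleftrightarrow> frame w \<and> A_mat w = mat 1"

definition Omega :: "('n::finite \<Rightarrow> real^'k::finite) set" where
  "Omega = {w. uframe w}"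

definition symvol :: "('n::finite \<Rightarrow> real^'k::finite) \<Rightarrow> real" where
  "symvol w = measure lebesgue (convex hull (range w \<union> range (\<lambda>i. - w i)))"

end

theory Submission
  imports Defs
begin

(* Every frame T factors as T i = Q *v U i with U a uframe: take for Q any square root
   Q Q^T = A_T, which exists because A_T is the Gram matrix of the independent columns of the
   matrix with rows T i. Since Q commutes with the convex hull,
   vol co{+-T} = |det Q| vol co{+-U} = sqrt (det A_T) vol co{+-U}, so the bound on
   vol co{+-T} / vol co{+-S} for all frames T is the same as the comparison of vol co{+-U}
   with vol co{+-S} for all uframes U. *)

lemma det_shear_matrix:
  fixes m n :: "'n::finite"
  assumes "m \<noteq> n"
  shows "det (matrix (\<lambda>x::real^'n. \<chi> i. if i = m then x$m + x$n else x$i)) = 1"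
proof -
  have "matrix (\<lambda>x::real^'n. \<chi> i. if i = m then x$m + x$n else x$i)
      = (\<chi> k. if k = m then row m (mat 1) + 1 *s row n (mat 1) else row k (mat 1))"
    by (auto simp: vec_eq_iff matrix_def row_def mat_def axis_def)
  then show ?thesis
    using det_row_operation[OF assms, of "mat 1" 1] by (simp add: det_I)
qed

lemma induct_linear_elementary_shears:
  fixes f :: "real^'n::finite \<Rightarrow> real^'n"
  assumes "linear f"
    and comp: "\<And>f g. \<lbrakk>linear f; linear g; P f; P g\<rbrakk> \<Longrightarrow> P (f \<circ> g)"
    and zeroes: "\<And>f i. \<lbrakk>linear f; \<And>x. (f x) $ i = 0\<rbrakk> \<Longrightarrow> P f"
    and const: "\<And>c. P (\<lambda>x. \<chi> i. c i * x$i)"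
    and idplus: "\<And>m n::'n. m \<noteq> n \<Longrightarrow> P (\<lambda>x. \<chi> i. if i = m then x$m + x$n else x$i)"
  shows "P f"
proof (rule induct_linear_elementary[OF \<open>linear f\<close> comp zeroes const _ idplus])
  fix m n :: 'n
  assume "m \<noteq> n"
  define E where "E m n = (\<lambda>x::real^'n. \<chi> i. if i = m then x$m + x$n else x$i)" for m n
  define D where "D = (\<lambda>x::real^'n. \<chi> i. (if i = n then -1 else 1) * x$i)"
  have "linear (E i j)" for i j
    by (rule linearI) (auto simp: E_def vec_eq_iff algebra_simps)
  moreover have "linear D"
    by (rule linearI) (auto simp: D_def vec_eq_iff algebra_simps)
  moreover have "P (E m n)" "P (E n m)" "P D"
    using idplus \<open>m \<noteq> n\<close> const unfolding E_def D_def by auto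
  ultimately have "P (D \<circ> E m n \<circ> D \<circ> E n m \<circ> D \<circ> E m n)"
    by (intro comp linear_compose) auto
  \<comment> \<open>A coordinate swap is a product of three shears and three sign changes.\<close>
  moreover have "D \<circ> E m n \<circ> D \<circ> E n m \<circ> D \<circ> E m n = (\<lambda>x. \<chi> i. x $ Transposition.transpose m n i)"
    using \<open>m \<noteq> n\<close> by (auto simp: E_def D_def vec_eq_iff Transposition.transpose_def)
  ultimately show "P (\<lambda>x. \<chi> i. x $ Transposition.transpose m n i)"
    by simp
qed

lemma measure_shear_image_cbox:
  fixes a b :: "real^'n::finite"
  assumes "m \<noteq> n"
  shows "measure lebesgue ((\<lambda>x. \<chi> i. if i = m then x$m + x$n else x$i) ` cbox a b)
       = measure lebesgue (cbox a b)"
proof (cases "cbox a b = {}")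
  case False
  let ?h = "\<lambda>x::real^'n. \<chi> i. if i = m then x$m + x$n else x$i"
  have box: "cbox a b = (+) a ` cbox 0 (b - a)"
    using cbox_translation[of a 0 "b - a"] by simp
  have "?h ` cbox a b = (+) (?h a) ` ?h ` cbox 0 (b - a)"
    unfolding box image_image by (rule image_cong) (simp_all add: vec_eq_iff)
  then have "measure lebesgue (?h ` cbox a b) = measure lebesgue (?h ` cbox 0 (b - a))"
    by (simp add: measure_translation)
  also have "\<dots> = measure lebesgue (cbox 0 (b - a))"
    using False \<open>m \<noteq> n\<close> by (intro measure_shear_interval) (auto simp: box)
  also have "\<dots> = measure lebesgue (cbox a b)"
    by (simp add: box measure_translation)
  finally show ?thesis .
qed simp

(* The library's measure_linear_image needs a wellordered index type, which it only uses to
   compute the determinant of a shear. *)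
lemma
  fixes f :: "real^'n::finite \<Rightarrow> real^'n"
  assumes "linear f" and "S \<in> lmeasurable"
  shows measurable_linear_image_cart: "f ` S \<in> lmeasurable"
    and measure_linear_image_cart:
      "measure lebesgue (f ` S) = \<bar>det (matrix f)\<bar> * measure lebesgue S"
proof -
  let ?P = "\<lambda>f. \<forall>S \<in> lmeasurable. f ` S \<in> lmeasurable
                  \<and> measure lebesgue (f ` S) = \<bar>det (matrix f)\<bar> * measure lebesgue S"
  have "?P f"
  proof (rule induct_linear_elementary_shears[OF \<open>linear f\<close>])
    fix f g :: "real^'n \<Rightarrow> real^'n"
    assume "linear f" "linear g" and f: "?P f" and g: "?P g"
    show "?P (f \<circ> g)"
    proof
      fix S :: "(real^'n) set"
      assume "S \<in> lmeasurable"
      then have "g ` S \<in> lmeasurable"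
        and g_meas: "measure lebesgue (g ` S) = \<bar>det (matrix g)\<bar> * measure lebesgue S"
        using g by auto
      then have "f ` g ` S \<in> lmeasurable"
        and "measure lebesgue (f ` g ` S) = \<bar>det (matrix f)\<bar> * measure lebesgue (g ` S)"
        using f by auto
      then show "(f \<circ> g) ` S \<in> lmeasurable
          \<and> measure lebesgue ((f \<circ> g) ` S) = \<bar>det (matrix (f \<circ> g))\<bar> * measure lebesgue S"
        unfolding image_comp [symmetric] matrix_compose[OF \<open>linear g\<close> \<open>linear f\<close>] g_meas
        by (simp add: det_mul abs_mult)
    qed
  next
    fix f :: "real^'n \<Rightarrow> real^'n" and i
    assume "linear f" and "\<And>x. f x $ i = 0"
    then have "\<not> inj f"
      by (metis linear_injective_imp_surjective one_neq_zero surjE vec_component)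
    then have "det (matrix f) = 0" "\<And>S. negligible (f ` S)"
      using det_nz_iff_inj \<open>linear f\<close> negligible_linear_singular_image by blast+
    then show "?P f"
      by (simp add: negligible_imp_measurable negligible_imp_measure0)
  next
    fix c :: "'n \<Rightarrow> real"
    show "?P (\<lambda>x. \<chi> i. c i * x$i)"
      by (simp add: measurable_stretch measure_stretch matrix_def axis_def det_diagonal)
  next
    fix m n :: 'n
    assume "m \<noteq> n"
    let ?h = "\<lambda>x::real^'n. \<chi> i. if i = m then x$m + x$n else x$i"
    have "linear ?h"
      by (rule linearI) (auto simp: vec_eq_iff algebra_simps)
    then have "?h ` S \<in> lmeasurable \<and> measure lebesgue (?h ` S) = measure lebesgue S"
      if "S \<in> lmeasurable" for S
      using measure_linear_sufficient[OF _ that, of ?h 1] \<open>m \<noteq> n\<close>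
      by (simp add: measure_shear_image_cbox)
    then show "?P ?h"
      using det_shear_matrix[OF \<open>m \<noteq> n\<close>] by simp
  qed
  then show "f ` S \<in> lmeasurable" "measure lebesgue (f ` S) = \<bar>det (matrix f)\<bar> * measure lebesgue S"
    using \<open>S \<in> lmeasurable\<close> by auto
qed

lemma A_mat_eq_transpose_mult: "A_mat T = transpose (\<chi> i. T i) ** (\<chi> i. T i)"
  by (simp add: A_mat_def vec_eq_iff matrix_matrix_mult_def transpose_def)

lemma A_mat_linear_image: "A_mat (\<lambda>i. Q *v T i) = Q ** A_mat T ** transpose Q"
proof -
  have "(\<chi> i. Q *v T i) = (\<chi> i. T i) ** transpose Q"
    by (simp add: vec_eq_iff matrix_matrix_mult_def matrix_vector_mult_def transpose_def mult.commute)
  then show ?thesis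
    by (simp add: A_mat_eq_transpose_mult matrix_transpose_mul matrix_mul_assoc)
qed

lemma transpose_mult_self_entry:
  fixes A :: "real^'k::finite^'n::finite"
  shows "(transpose A ** A) $ a $ b = (A *v axis a 1) \<bullet> (A *v axis b 1)"
  by (simp add: matrix_matrix_mult_def transpose_def inner_vec_def matrix_vector_mult_def
      axis_def if_distrib cong: if_cong)

lemma gram_matrix_factorization:
  fixes V :: "real^'k::finite^'n::finite"
  assumes "inj ((*v) V)"
  obtains Q :: "real^'k^'k" where "invertible Q" "transpose V ** V = Q ** transpose Q"
proof -
  have "dim (range ((*v) V)) = dim (UNIV :: (real^'k) set)"
    using assms by (intro dim_image_eq) (auto intro: inj_on_subset)
  then obtain g :: "real^'n \<Rightarrow> real^'k"
    where "linear g" and g: "\<And>y. y \<in> range ((*v) V) \<Longrightarrow> norm (g y) = norm y"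
    using isometries_subspaces[OF linear_subspace_image[OF _ subspace_UNIV] subspace_UNIV]
    by (metis matrix_vector_mul_linear)
  \<comment> \<open>M is an isometric copy of V with values in the k-dimensional space, so it is square
    and has the same Gram matrix.\<close>
  define M where "M = g \<circ> (*v) V"
  have "linear M"
    unfolding M_def using \<open>linear g\<close> by (simp add: linear_compose)
  have norm_M: "norm (M x) = norm (V *v x)" for x
    by (simp add: M_def g)
  have inner_M: "M x \<bullet> M y = (V *v x) \<bullet> (V *v y)" for x y
  proof -
    have sums: "M x + M y = M (x + y)" "V *v x + V *v y = V *v (x + y)"
      by (simp_all add: linear_add[OF \<open>linear M\<close>] matrix_vector_right_distrib)
    show ?thesis
      by (simp only: dot_norm sums norm_M)
  qed
  have "inj M"
    unfolding linear_injective_0[OF \<open>linear M\<close>]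
    using assms norm_M by (metis inj_eq matrix_vector_mult_0_right norm_eq_zero)
  have M_matrix: "matrix M *v x = M x" for x
    by (metis matrix_vector_mul(2)[OF \<open>linear M\<close>])
  from \<open>inj M\<close> have "invertible (matrix M)"
    using \<open>linear M\<close> det_nz_iff_inj invertible_det_nz by blast
  show thesis
  proof
    show "invertible (transpose (matrix M))"
      using \<open>invertible (matrix M)\<close> by (simp add: transpose_invertible)
    show "transpose V ** V = transpose (matrix M) ** transpose (transpose (matrix M))"
      by (simp add: vec_eq_iff transpose_mult_self_entry[where A = V]
          transpose_mult_self_entry[where A = "matrix M"] M_matrix inner_M)
  qed
qed

lemma frame_eq_linear_image_uframe:
  fixes T :: "'n::finite \<Rightarrow> real^'k::finite"
  assumes "frame T"
  obtains U :: "'n \<Rightarrow> real^'k" and Q :: "real^'k^'k"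
  where "uframe U" "T = (\<lambda>i. Q *v U i)"
proof -
  have "range T = rows (\<chi> i. T i)"
    by (auto simp: rows_def row_def)
  then have "inj ((*v) (\<chi> i. T i))"
    using assms matrix_left_invertible_span_rows matrix_left_invertible_injective
    unfolding frame_def by metis
  then obtain Q :: "real^'k^'k"
    where "invertible Q" and "transpose (\<chi> i. T i) ** (\<chi> i. T i) = Q ** transpose Q"
    by (rule gram_matrix_factorization) blast
  then have A_T: "A_mat T = Q ** transpose Q"
    by (simp add: A_mat_eq_transpose_mult)
  from \<open>invertible Q\<close> obtain R where RQ: "R ** Q = mat 1" "Q ** R = mat 1"
    by (auto simp: invertible_def)
  define U where "U = (\<lambda>i. R *v T i)"
  have T_eq: "T = (\<lambda>i. Q *v U i)"
    by (simp add: U_def matrix_vector_mul_assoc RQ)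
  have "A_mat U = (R ** Q) ** transpose (R ** Q)"
    by (simp add: U_def A_mat_linear_image A_T matrix_transpose_mul matrix_mul_assoc)
  then have "A_mat U = mat 1"
    by (simp add: RQ)
  moreover have "span (range U) = UNIV"
  proof -
    have "span (range U) = (*v) R ` span (range T)"
      using span_linear_image[of "(*v) R" "range T"] by (simp add: U_def image_image)
    moreover have "y = R *v (Q *v y)" for y
      by (simp add: matrix_vector_mul_assoc RQ)
    ultimately show ?thesis
      using assms by (auto simp: frame_def)
  qed
  ultimately show thesis
    using that T_eq by (simp add: uframe_def frame_def)
qed

lemma symvol_linear_image:
  fixes Q :: "real^'k::finite^'k" and U :: "'n::finite \<Rightarrow> real^'k"
  shows "symvol (\<lambda>i. Q *v U i) = \<bar>det Q\<bar> * symvol U"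
proof -
  let ?X = "range U \<union> range (\<lambda>i. - U i)"
  have "range (\<lambda>i. Q *v U i) \<union> range (\<lambda>i. - (Q *v U i)) = (*v) Q ` ?X"
    by (auto simp: image_Un image_image linear_neg[OF matrix_vector_mul_linear])
  moreover have "convex hull ?X \<in> lmeasurable"
    by (intro lmeasurable_compact compact_convex_hull finite_imp_compact) auto
  ultimately show ?thesis
    by (simp add: symvol_def convex_hull_linear_image [symmetric] measure_linear_image_cart)
qed

lemma symvol_pos:
  assumes "frame S"
  shows "0 < symvol S"
proof -
  let ?X = "range S \<union> range (\<lambda>i. - S i)"
  have "(1/2) *\<^sub>R S i + (1/2) *\<^sub>R (- S i) \<in> convex hull ?X" for i
    by (intro convexD) (auto intro: hull_inc)
  then have "0 \<in> convex hull ?X"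
    by simp
  then have "affine hull ?X = span ?X"
    using convex_hull_subset_affine_hull affine_hull_span_0 by blast
  moreover have "span ?X = UNIV"
    using assms span_mono[of "range S" ?X] by (auto simp: frame_def)
  ultimately have "affine hull (convex hull ?X) = UNIV"
    by (simp add: affine_hull_convex_hull)
  then have "interior (convex hull ?X) \<noteq> {}"
    using \<open>0 \<in> convex hull ?X\<close> by (simp add: rel_interior_interior [symmetric] rel_interior_eq_empty)
  then have "\<not> negligible (convex hull ?X)"
    by (simp add: negligible_convex_interior)
  moreover have "convex hull ?X \<in> lmeasurable"
    by (intro lmeasurable_compact compact_convex_hull finite_imp_compact) auto
  ultimately show ?thesis
    unfolding symvol_def by (simp add: negligible_iff_measure0 zero_less_measure_iff)
qed

lemma symvol_frame_eq_sqrt_det_mult_uframe: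
  fixes T :: "'n::finite \<Rightarrow> real^'k::finite"
  assumes "frame T"
  obtains U :: "'n \<Rightarrow> real^'k"
  where "uframe U" "0 \<le> det (A_mat T)" "symvol T = sqrt (det (A_mat T)) * symvol U"
proof -
  obtain U :: "'n \<Rightarrow> real^'k" and Q :: "real^'k^'k"
    where "uframe U" and T: "T = (\<lambda>i. Q *v U i)"
    using frame_eq_linear_image_uframe[OF assms] .
  have "A_mat T = Q ** transpose Q"
    using \<open>uframe U\<close> by (simp add: T A_mat_linear_image uframe_def)
  then have det: "det (A_mat T) = (det Q)\<^sup>2"
    by (simp add: det_mul power2_eq_square)
  show thesis
  proof (rule that[OF \<open>uframe U\<close>])
    show "0 \<le> det (A_mat T)"
      by (simp add: det)
    show "symvol T = sqrt (det (A_mat T)) * symvol U"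
      using symvol_linear_image[of Q U] by (simp add: det flip: T)
  qed
qed

lemma frame_bound_iff_uframe_bound:
  fixes R :: "real \<Rightarrow> real \<Rightarrow> bool"
  assumes scale: "\<And>a x y. 0 \<le> a \<Longrightarrow> R x y \<Longrightarrow> R (a * x) (a * y)"
  shows "(\<forall>T::'n::finite \<Rightarrow> real^'k::finite. frame T \<longrightarrow> R (symvol T / c) (sqrt (det (A_mat T))))
     \<longleftrightarrow> (\<forall>U::'n \<Rightarrow> real^'k \<in> Omega. R (symvol U / c) 1)"
proof (intro iffI allI impI ballI)
  fix U :: "'n \<Rightarrow> real^'k"
  assume bound: "\<forall>T::'n \<Rightarrow> real^'k. frame T \<longrightarrow> R (symvol T / c) (sqrt (det (A_mat T)))"
    and "U \<in> Omega"
  then show "R (symvol U / c) 1"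
    using bound[rule_format, of U] by (simp add: Omega_def uframe_def det_I)
next
  fix T :: "'n \<Rightarrow> real^'k"
  assume bound: "\<forall>U::'n \<Rightarrow> real^'k \<in> Omega. R (symvol U / c) 1" and "frame T"
  obtain U :: "'n \<Rightarrow> real^'k" where "U \<in> Omega" "0 \<le> det (A_mat T)"
    and T: "symvol T = sqrt (det (A_mat T)) * symvol U"
    using symvol_frame_eq_sqrt_det_mult_uframe[OF \<open>frame T\<close>] by (auto simp: Omega_def)
  then have "R (sqrt (det (A_mat T)) * (symvol U / c)) (sqrt (det (A_mat T)) * 1)"
    using bound by (intro scale) auto
  then show "R (symvol T / c) (sqrt (det (A_mat T)))"
    by (simp add: T)
qed

theorem lemma2:
  fixes S :: "'n::finite \<Rightarrow> real^'k::finite"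
  assumes "CARD('k) \<le> CARD('n)"
    and "S \<in> Omega"
  shows "((\<forall>S'::'n \<Rightarrow> real^'k\<in>Omega. symvol S' \<le> symvol S) \<longleftrightarrow>
            (\<forall>T::'n \<Rightarrow> real^'k. frame T \<longrightarrow> symvol T / symvol S \<le> sqrt (det (A_mat T))))
       \<and> ((\<forall>S'::'n \<Rightarrow> real^'k\<in>Omega. symvol S \<le> symvol S') \<longleftrightarrow>
            (\<forall>T::'n \<Rightarrow> real^'k. frame T \<longrightarrow> symvol T / symvol S \<ge> sqrt (det (A_mat T))))"
proof -
  have "0 < symvol S"
    using assms(2) by (intro symvol_pos) (simp add: Omega_def uframe_def)
  moreover have "(\<forall>T::'n \<Rightarrow> real^'k. frame T \<longrightarrow> symvol T / symvol S \<le> sqrt (det (A_mat T)))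
      \<longleftrightarrow> (\<forall>U::'n \<Rightarrow> real^'k \<in> Omega. symvol U / symvol S \<le> 1)"
    by (rule frame_bound_iff_uframe_bound) (rule mult_left_mono)
  moreover have "(\<forall>T::'n \<Rightarrow> real^'k. frame T \<longrightarrow> symvol T / symvol S \<ge> sqrt (det (A_mat T)))
      \<longleftrightarrow> (\<forall>U::'n \<Rightarrow> real^'k \<in> Omega. symvol U / symvol S \<ge> 1)"
    by (rule frame_bound_iff_uframe_bound[where R = "\<lambda>x y. y \<le> x"]) (rule mult_left_mono)
  ultimately show ?thesis
    by (simp add: divide_le_eq_1 le_divide_eq_1)
qed

end
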